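(* Let $X$ be a complex Banach space, $\mathcal{F}$ a commutative algebra with unit, $\Phi:\mathcal{F}\to\mathcal{C}(X)$ a calculus, and $\mathcal{G}$ a unital subalgebra of $\mathcal{F}$ such that for each $g\in\mathcal{G}$ the set $\mathrm{reg}(g,\Phi)\cap\mathcal{G}$ is an anchor set. Then $\mathcal{G}$ is $\Phi$-regular, i.e., the restriction $\Phi|_{\mathcal{G}}:\mathcal{G}\to\mathcal{C}(X)$ is a calculus.
   Context: $\mathcal{L}(X)$, $\mathcal{C}(X)$: bounded, resp. closed linear operators on $X$; operator inclusions are graph inclusions, sums/products have natural domains, "$Tx=y$" means $x\in\mathrm{dom}(T)$, $Tx=y$. For a unital algebra $\mathcal{H}$, a proto-calculus is a map $\Phi:\mathcal{H}\to\mathcal{C}(X)$ with (FC1) $\Phi(\mathbf{1})=I$; (FC2) $\lambda\Phi(f)\subseteq\Phi(\lambda f)$, $\Phi(f)+\Phi(g)\subseteq\Phi(f+g)$; (FC3) $\Phi(f)\Phi(g)\subseteq\Phi(fg)$ with $\mathrm{dom}(\Phi(f)\Phi(g))=\mathrm{dom}(\Phi(g))\cap\mathrm{dom}(\Phi(fg))$. $\mathrm{bdd}(\mathcal{H},\Phi)=\{f\in\mathcal{H}:\Phi(f)\in\mathcal{L}(X)\}$, $\mathrm{reg}(f,\Phi)=\{e\in\mathcal{H}: e,ef\in\mathrm{bdd}(\mathcal{H},\Phi)\}$. A calculus is a proto-calculus such that for every $f\in\mathcal{H}$ and $x,y\in X$: $\Phi(f)x=y\iff\Phi(ef)x=\Phi(e)y$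 for all $e\in\mathrm{reg}(f,\Phi)$. A nonempty set $\mathcal{M}$ of $\Phi$-bounded elements is an anchor set if $\bigcap_{e\in\mathcal{M}}\ker\Phi(e)=\{0\}$. *)

theory Defs
  imports "HOL-Analysis.Analysis"
begin

class complex_vector = real_vector +
  fixes scaleC :: "complex \<Rightarrow> 'a \<Rightarrow> 'a" (infixr \<open>*\<^sub>C\<close> 75)
  assumes scaleC_add_right: "a *\<^sub>C (x + y) = a *\<^sub>C x + a *\<^sub>C y"
    and scaleC_add_left: "(a + b) *\<^sub>C x = a *\<^sub>C x + b *\<^sub>C x"
    and scaleC_scaleC: "a *\<^sub>C (b *\<^sub>C x) = (a * b) *\<^sub>C x"
    and scaleC_one: "1 *\<^sub>C x = x"
    and scaleR_scaleC: "scaleR r x = complex_of_real r *\<^sub>C x"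

class complex_normed_vector = complex_vector + real_normed_vector +
  assumes norm_scaleC: "norm (a *\<^sub>C x) = cmod a * norm x"

(* complex Banach spaces: complex_normed_vector + banach *)

class complex_algebra_1 = complex_vector + ring_1 +
  assumes mult_scaleC_left: "(a *\<^sub>C x) * y = a *\<^sub>C (x * y)"
    and mult_scaleC_right: "x * (a *\<^sub>C y) = a *\<^sub>C (x * y)"

section \<open>Linear operators on X, represented by their graphs\<close>

type_synonym 'x op = "('x \<times> 'x) set"

definition op_dom :: "'x op \<Rightarrow> 'x set" where
  "op_dom T = fst ` T"

definition op_ker :: "'x::zero op \<Rightarrow> 'x set" where
  "op_ker T = {x. (x, 0) \<in> T}"

definition linear_op :: "'x::complex_vector op \<Rightarrow> bool" where
  "linear_op T \<longleftrightarrow>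
     (\<forall>x y z. (x, y) \<in> T \<longrightarrow> (x, z) \<in> T \<longrightarrow> y = z) \<and>
     (0, 0) \<in> T \<and>
     (\<forall>x y u v. (x, y) \<in> T \<longrightarrow> (u, v) \<in> T \<longrightarrow> (x + u, y + v) \<in> T) \<and>
     (\<forall>c x y. (x, y) \<in> T \<longrightarrow> (c *\<^sub>C x, c *\<^sub>C y) \<in> T)"

text \<open>\<open>\<C>(X)\<close>: closed linear operators (closed graph in X \<times> X).\<close>
definition closed_op :: "'x::complex_normed_vector op \<Rightarrow> bool" where
  "closed_op T \<longleftrightarrow> linear_op T \<and> closed T"

definition bounded_op :: "'x::complex_normed_vector op \<Rightarrow> bool" where
  "bounded_op T \<longleftrightarrow> linear_op T \<and> op_dom T = UNIV \<and>
     (\<exists>C. \<forall>x y. (x, y) \<in> T \<longrightarrow> norm y \<le> C * norm x)"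

definition op_id :: "'x op" where
  "op_id = {(x, x) | x. True}"

definition op_scale :: "complex \<Rightarrow> 'x::complex_vector op \<Rightarrow> 'x op" where
  "op_scale c T = {(x, c *\<^sub>C y) | x y. (x, y) \<in> T}"

definition op_plus :: "'x::plus op \<Rightarrow> 'x op \<Rightarrow> 'x op" where
  "op_plus T S = {(x, y + z) | x y z. (x, y) \<in> T \<and> (x, z) \<in> S}"

text \<open>Product \<open>T S\<close> (first S, then T) with natural domain.\<close>
definition op_comp :: "'x op \<Rightarrow> 'x op \<Rightarrow> 'x op" where
  "op_comp T S = {(x, z) | x y z. (x, y) \<in> S \<and> (y, z) \<in> T}"

definition unital_subalgebra :: "'f::complex_algebra_1 set \<Rightarrow> bool" where
  "unital_subalgebra G \<longleftrightarrow> 1 \<in> G \<and>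
     (\<forall>a\<in>G. \<forall>b\<in>G. a + b \<in> G \<and> a * b \<in> G) \<and>
     (\<forall>c. \<forall>a\<in>G. c *\<^sub>C a \<in> G)"

definition proto_calculus ::
  "'f::complex_algebra_1 set \<Rightarrow> ('f \<Rightarrow> 'x::complex_normed_vector op) \<Rightarrow> bool" where
  "proto_calculus H \<Phi> \<longleftrightarrow>
     (\<forall>f\<in>H. closed_op (\<Phi> f)) \<and>
     \<Phi> 1 = op_id \<and>
     (\<forall>c. \<forall>f\<in>H. op_scale c (\<Phi> f) \<subseteq> \<Phi> (c *\<^sub>C f)) \<and>
     (\<forall>f\<in>H. \<forall>g\<in>H. op_plus (\<Phi> f) (\<Phi> g) \<subseteq> \<Phi> (f + g)) \<and>
     (\<forall>f\<in>H. \<forall>g\<in>H. op_comp (\<Phi> f) (\<Phi> g) \<subseteq> \<Phi> (f * g) \<and>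
        op_dom (op_comp (\<Phi> f) (\<Phi> g)) = op_dom (\<Phi> g) \<inter> op_dom (\<Phi> (f * g)))"

definition bdd :: "'f set \<Rightarrow> ('f \<Rightarrow> 'x::complex_normed_vector op) \<Rightarrow> 'f set" where
  "bdd H \<Phi> = {f \<in> H. bounded_op (\<Phi> f)}"

definition reg :: "'f::times set \<Rightarrow> 'f \<Rightarrow> ('f \<Rightarrow> 'x::complex_normed_vector op) \<Rightarrow> 'f set" where
  "reg H f \<Phi> = {e \<in> H. e \<in> bdd H \<Phi> \<and> e * f \<in> bdd H \<Phi>}"

definition calculus ::
  "'f::complex_algebra_1 set \<Rightarrow> ('f \<Rightarrow> 'x::complex_normed_vector op) \<Rightarrow> bool" where
  "calculus H \<Phi> \<longleftrightarrow> proto_calculus H \<Phi> \<and>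
     (\<forall>f\<in>H. \<forall>x y. (x, y) \<in> \<Phi> f \<longleftrightarrow>
        (\<forall>e\<in>reg H f \<Phi>. \<exists>w. (x, w) \<in> \<Phi> (e * f) \<and> (y, w) \<in> \<Phi> e))"

definition anchor_set ::
  "'f set \<Rightarrow> ('f \<Rightarrow> 'x::complex_normed_vector op) \<Rightarrow> 'f set \<Rightarrow> bool" where
  "anchor_set H \<Phi> M \<longleftrightarrow> M \<noteq> {} \<and> M \<subseteq> bdd H \<Phi> \<and>
     (\<Inter>e\<in>M. op_ker (\<Phi> e)) = {0}"

end

theory Submission
  imports Defs
begin

text \<open>Let \<open>f \<in> \<G>\<close> and suppose \<open>\<Phi>(e f) x = \<Phi>(e) y\<close> for all \<open>e\<close> in the anchor set
  \<open>M = reg(f, \<Phi>) \<inter> \<G>\<close>. For an arbitrary \<open>d \<in> reg(f, \<Phi>)\<close> put \<open>a = \<Phi>(d f) x\<close> and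
  \<open>b = \<Phi>(d) y\<close>. By the product rule and commutativity, for \<open>e \<in> M\<close> both \<open>\<Phi>(e) a\<close> and
  \<open>\<Phi>(e) b\<close> equal \<open>\<Phi>(d) \<Phi>(e f) x = \<Phi>(d) \<Phi>(e) y\<close>, so \<open>a - b\<close> lies in every kernel
  \<open>ker \<Phi>(e)\<close>, \<open>e \<in> M\<close>, hence vanishes. Thus \<open>\<Phi>(d f) x = \<Phi>(d) y\<close> for all regularisers
  \<open>d\<close> of \<open>f\<close> in \<open>\<F>\<close>, and \<open>\<Phi>(f) x = y\<close> because \<open>\<Phi>\<close> is a calculus on \<open>\<F>\<close>.\<close>

lemma linear_op_single_valued:
  "linear_op T \<Longrightarrow> (x, y) \<in> T \<Longrightarrow> (x, z) \<in> T \<Longrightarrow> y = z"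
  unfolding linear_op_def by blast

lemma linear_op_diff_in_ker:
  assumes "linear_op T" "(a, v) \<in> T" "(b, v) \<in> T"
  shows "a - b \<in> op_ker T"
proof -
  have minus_scaleC: "(-1) *\<^sub>C u = - u" for u :: 'a
    by (metis scaleR_scaleC scaleR_minus1_left of_real_1 of_real_minus)
  have "(- b, - v) \<in> T"
    using assms minus_scaleC unfolding linear_op_def by metis
  then have "(a + - b, v + - v) \<in> T"
    using assms unfolding linear_op_def by blast
  then show ?thesis
    unfolding op_ker_def by simp
qed

lemma bounded_op_total: "bounded_op T \<Longrightarrow> \<exists>y. (x, y) \<in> T"
  unfolding bounded_op_def op_dom_def by force

lemma proto_calculus_comp:
  assumes "proto_calculus UNIV \<Phi>" "(x, y) \<in> \<Phi> g" "(y, z) \<in> \<Phi> f"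
  shows "(x, z) \<in> \<Phi> (f * g)"
proof -
  have "(x, z) \<in> op_comp (\<Phi> f) (\<Phi> g)"
    using assms(2,3) unfolding op_comp_def by blast
  then show ?thesis
    using assms(1) unfolding proto_calculus_def by blast
qed

lemma proto_calculus_single_valued:
  "proto_calculus UNIV \<Phi> \<Longrightarrow> (x, y) \<in> \<Phi> f \<Longrightarrow> (x, z) \<in> \<Phi> f \<Longrightarrow> y = z"
  unfolding proto_calculus_def closed_op_def using linear_op_single_valued by blast

lemma proto_calculus_subset: "proto_calculus H \<Phi> \<Longrightarrow> G \<subseteq> H \<Longrightarrow> proto_calculus G \<Phi>"
  unfolding proto_calculus_def by blast

lemma reg_subset_reg_UNIV: "reg G f \<Phi> \<subseteq> reg UNIV f \<Phi>"
  unfolding reg_def bdd_def by auto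

lemma reg_unital_subalgebra:
  "unital_subalgebra G \<Longrightarrow> f \<in> G \<Longrightarrow> reg G f \<Phi> = reg UNIV f \<Phi> \<inter> G"
  unfolding unital_subalgebra_def reg_def bdd_def by auto

lemma proto_calculus_reg_diff_in_ker:
  fixes \<Phi> :: "'f::{comm_ring_1, complex_algebra_1} \<Rightarrow> 'x::complex_normed_vector op"
  assumes pc: "proto_calculus UNIV \<Phi>"
    and "bounded_op (\<Phi> d)" "bounded_op (\<Phi> e)"
    and a: "(x, a) \<in> \<Phi> (d * f)" and b: "(y, b) \<in> \<Phi> d"
    and w: "(x, w) \<in> \<Phi> (e * f)" "(y, w) \<in> \<Phi> e"
  shows "a - b \<in> op_ker (\<Phi> e)"
proof -
  obtain u where u: "(w, u) \<in> \<Phi> d"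
    using bounded_op_total assms(2) by blast
  obtain v where v: "(a, v) \<in> \<Phi> e"
    using bounded_op_total assms(3) by blast
  obtain v' where v': "(b, v') \<in> \<Phi> e"
    using bounded_op_total assms(3) by blast
  have "(x, v) \<in> \<Phi> (e * (d * f))" "(x, u) \<in> \<Phi> (d * (e * f))"
    using proto_calculus_comp[OF pc] a v w u by blast+
  moreover have "e * (d * f) = d * (e * f)"
    by (simp add: ac_simps)
  ultimately have "v = u"
    using proto_calculus_single_valued[OF pc] by metis
  have "(y, v') \<in> \<Phi> (e * d)" "(y, u) \<in> \<Phi> (d * e)"
    using proto_calculus_comp[OF pc] b v' w u by blast+
  moreover have "e * d = d * e"
    by (simp add: ac_simps)
  ultimately have "v' = u"
    using proto_calculus_single_valued[OF pc] by metis
  show ?thesis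
    using linear_op_diff_in_ker pc v v' \<open>v = u\<close> \<open>v' = u\<close>
    unfolding proto_calculus_def closed_op_def by blast
qed

lemma calculus_eval_by_anchor_set:
  fixes \<Phi> :: "'f::{comm_ring_1, complex_algebra_1} \<Rightarrow> 'x::complex_normed_vector op"
  assumes calc: "calculus UNIV \<Phi>"
    and M: "anchor_set UNIV \<Phi> M" "M \<subseteq> reg UNIV f \<Phi>"
    and xy: "\<forall>e\<in>M. \<exists>w. (x, w) \<in> \<Phi> (e * f) \<and> (y, w) \<in> \<Phi> e"
  shows "(x, y) \<in> \<Phi> f"
proof -
  have pc: "proto_calculus UNIV \<Phi>"
    using calc unfolding calculus_def by blast
  have "\<exists>w. (x, w) \<in> \<Phi> (d * f) \<and> (y, w) \<in> \<Phi> d" if d: "d \<in> reg UNIV f \<Phi>" for d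
  proof -
    have bounded: "bounded_op (\<Phi> d)" "bounded_op (\<Phi> (d * f))"
      using d unfolding reg_def bdd_def by auto
    obtain a where a: "(x, a) \<in> \<Phi> (d * f)"
      using bounded_op_total bounded by blast
    obtain b where b: "(y, b) \<in> \<Phi> d"
      using bounded_op_total bounded by blast
    have "a - b \<in> op_ker (\<Phi> e)" if "e \<in> M" for e
    proof -
      have "bounded_op (\<Phi> e)"
        using \<open>e \<in> M\<close> M(2) unfolding reg_def bdd_def by auto
      then show ?thesis
        using proto_calculus_reg_diff_in_ker[OF pc bounded(1) _ a b] xy \<open>e \<in> M\<close> by blast
    qed
    then have "a - b = 0"
      using M(1) unfolding anchor_set_def by blast
    then show ?thesis
      using a b by auto
  qed
  then show ?thesis
    using calc unfolding calculus_def by blast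
qed

lemma calculus_restrict:
  fixes \<Phi> :: "'f::{comm_ring_1, complex_algebra_1} \<Rightarrow> 'x::complex_normed_vector op"
  assumes calc: "calculus UNIV \<Phi>"
    and anchor: "\<forall>g\<in>G. anchor_set UNIV \<Phi> (reg G g \<Phi>)"
  shows "calculus G \<Phi>"
  unfolding calculus_def
proof (intro conjI ballI allI)
  show "proto_calculus G \<Phi>"
    using calc proto_calculus_subset unfolding calculus_def by blast
next
  fix f x y
  assume "f \<in> G"
  show "(x, y) \<in> \<Phi> f \<longleftrightarrow> (\<forall>e\<in>reg G f \<Phi>. \<exists>w. (x, w) \<in> \<Phi> (e * f) \<and> (y, w) \<in> \<Phi> e)"
  proof
    assume "(x, y) \<in> \<Phi> f"
    then show "\<forall>e\<in>reg G f \<Phi>. \<exists>w. (x, w) \<in> \<Phi> (e * f) \<and> (y, w) \<in> \<Phi> e"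
      using calc reg_subset_reg_UNIV unfolding calculus_def by blast
  next
    assume "\<forall>e\<in>reg G f \<Phi>. \<exists>w. (x, w) \<in> \<Phi> (e * f) \<and> (y, w) \<in> \<Phi> e"
    then show "(x, y) \<in> \<Phi> f"
      using calculus_eval_by_anchor_set[OF calc] anchor \<open>f \<in> G\<close> reg_subset_reg_UNIV by blast
  qed
qed

theorem theorem5p6:
  fixes \<Phi> :: "'f::{comm_ring_1, complex_algebra_1} \<Rightarrow> 'x::{complex_normed_vector, banach} op"
    and G :: "'f set"
  assumes "calculus UNIV \<Phi>"
    and "unital_subalgebra G"
    and "\<forall>g\<in>G. anchor_set UNIV \<Phi> (reg UNIV g \<Phi> \<inter> G)"
  shows "calculus G \<Phi>"
proof (rule calculus_restrict[OF assms(1)])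
  show "\<forall>g\<in>G. anchor_set UNIV \<Phi> (reg G g \<Phi>)"
  proof
    fix g
    assume "g \<in> G"
    then show "anchor_set UNIV \<Phi> (reg G g \<Phi>)"
      using assms(3) reg_unital_subalgebra[OF assms(2) \<open>g \<in> G\<close>, of \<Phi>] by simp
  qed
qed

end
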